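(* Let $M$ be a $(B,A)$-bimodule with $M_A$ finitely generated projective, $S=\mathrm{End}_A(M)$, and $\mathcal{C}=M^*\otimes_BM$ the comatrix $A$-coring. Suppose $\gamma:\mathcal{C}\otimes_A\mathcal{C}\to A$ is a pre-cointegral for $\mathcal{C}$. Identify $S\cong M\otimes_AM^*$ (via $m\otimes\varphi\mapsto(x\mapsto m\varphi(x))$), so that $S\otimes_BS\otimes_BS\cong M\otimes_A\mathcal{C}\otimes_A\mathcal{C}\otimes_AM^*$, and define $\tilde\gamma:S\otimes_BS\otimes_BS\to S$ by $\tilde\gamma(m\otimes\varphi\otimes m'\otimes\varphi'\otimes m''\otimes\varphi'')=m\,\gamma(\varphi\otimes m'\otimes\varphi'\otimes m'')\otimes\varphi''$ (i.e. $\tilde\gamma=M\otimes\gamma\otimes M^*$ followed by $M\otimes_AA\otimes_AM^*\cong M\otimes_AM^*$). Then $\tilde\gamma$, regarded as a map $(S\otimes_BS)\otimes_S(S\otimes_BS)\cong S\otimes_BS\otimes_BS\to S$, is a pre-cointegral for the Sweedler $S$-coring $S\otimes_BS$.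
   Context: All rings are associative with $1$. For a $(B,A)$-bimodule $M$ with $M_A$ finitely generated projective, $M^*=\mathrm{Hom}_A(M,A)$ is an $(A,B)$-bimodule, and with a finite dual basis $\{e_i,e_i^*\}_{i\in I}$ the comatrix $A$-coring is $M^*\otimes_BM$ with coproduct $\varphi\otimes m\mapsto\sum_i\varphi\otimes e_i\otimes e_i^*\otimes m$ and counit $\varphi\otimes m\mapsto\varphi(m)$. $S=\mathrm{End}_A(M)$ with composition, and $B\to S$, $b\mapsto(m\mapsto bm)$. The Sweedler $S$-coring $S\otimes_BS$ has coproduct $s\otimes s'\mapsto s\otimes1_S\otimes s'$ and counit $s\otimes s'\mapsto ss'$. For an $A$-coring $\mathcal{C}$ with coproduct $\Delta(c)=\sum c_{(1)}\otimes c_{(2)}$, a pre-cointegral is an $(A,A)$-bimodule map $\gamma:\mathcal{C}\otimes_A\mathcal{C}\to A$ such that $\sum c_{(1)}\gamma(c_{(2)}\otimes c')=\sum\gamma(c\otimes c'_{(1)})c'_{(2)}$ for all $c,c'\in\mathcal{C}$. *)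

theory Defs
  imports Main "HOL-Library.Function_Algebras"
begin

text \<open>The free abelian group on X x Y is modelled by finitely supported functions
  X x Y -> int; a formal sum (list of pairs) is mapped to its indicator-count function.
  X \<otimes>_R Y is the quotient by the subgroup generated by the usual bilinearity and
  R-balancing relations; two formal sums are equal in X \<otimes>_R Y iff their difference
  lies in that subgroup.\<close>

definition fsingle :: "'p \<Rightarrow> 'p \<Rightarrow> int" where
  "fsingle p = (\<lambda>q. if q = p then 1 else 0)"

definition formal :: "'p list \<Rightarrow> 'p \<Rightarrow> int" where
  "formal xs = sum_list (map fsingle xs)"

inductive_set tensor_rels ::
  "'x::ab_group_add set \<Rightarrow> 'y::ab_group_add set \<Rightarrow> ('x \<Rightarrow> 'r \<Rightarrow> 'x) \<Rightarrow> ('r \<Rightarrow> 'y \<Rightarrow> 'y)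
     \<Rightarrow> ('x \<times> 'y \<Rightarrow> int) set"
  for X Y rx ly where
  zero: "0 \<in> tensor_rels X Y rx ly"
| add: "u \<in> tensor_rels X Y rx ly \<Longrightarrow> v \<in> tensor_rels X Y rx ly \<Longrightarrow> u + v \<in> tensor_rels X Y rx ly"
| neg: "u \<in> tensor_rels X Y rx ly \<Longrightarrow> - u \<in> tensor_rels X Y rx ly"
| addl: "x \<in> X \<Longrightarrow> x' \<in> X \<Longrightarrow> y \<in> Y \<Longrightarrow>
     fsingle (x + x', y) - fsingle (x, y) - fsingle (x', y) \<in> tensor_rels X Y rx ly"
| addr: "x \<in> X \<Longrightarrow> y \<in> Y \<Longrightarrow> y' \<in> Y \<Longrightarrow>
     fsingle (x, y + y') - fsingle (x, y) - fsingle (x, y') \<in> tensor_rels X Y rx ly"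
| bal: "x \<in> X \<Longrightarrow> y \<in> Y \<Longrightarrow>
     fsingle (rx x r, y) - fsingle (x, ly r y) \<in> tensor_rels X Y rx ly"

definition tensor_eq ::
  "'x::ab_group_add set \<Rightarrow> 'y::ab_group_add set \<Rightarrow> ('x \<Rightarrow> 'r \<Rightarrow> 'x) \<Rightarrow> ('r \<Rightarrow> 'y \<Rightarrow> 'y)
     \<Rightarrow> ('x \<times> 'y) list \<Rightarrow> ('x \<times> 'y) list \<Rightarrow> bool" where
  "tensor_eq X Y rx ly xs ys \<longleftrightarrow> formal xs - formal ys \<in> tensor_rels X Y rx ly"

definition bimodule :: "('b::ring_1 \<Rightarrow> 'm::ab_group_add \<Rightarrow> 'm) \<Rightarrow> ('m \<Rightarrow> 'a::ring_1 \<Rightarrow> 'm) \<Rightarrow> bool" where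
  "bimodule lact ract \<longleftrightarrow>
     (\<forall>b m m'. lact b (m + m') = lact b m + lact b m') \<and>
     (\<forall>b b' m. lact (b + b') m = lact b m + lact b' m) \<and>
     (\<forall>b b' m. lact (b * b') m = lact b (lact b' m)) \<and>
     (\<forall>m. lact 1 m = m) \<and>
     (\<forall>a m m'. ract (m + m') a = ract m a + ract m' a) \<and>
     (\<forall>a a' m. ract m (a + a') = ract m a + ract m a') \<and>
     (\<forall>a a' m. ract m (a * a') = ract (ract m a) a') \<and>
     (\<forall>m. ract m 1 = m) \<and>
     (\<forall>b m a. lact b (ract m a) = ract (lact b m) a)"

definition dual :: "('m::ab_group_add \<Rightarrow> 'a::ring_1 \<Rightarrow> 'm) \<Rightarrow> ('m \<Rightarrow> 'a) set" where
  "dual ract = {\<phi>. (\<forall>m m'. \<phi> (m + m') = \<phi> m + \<phi> m') \<and> (\<forall>m a. \<phi> (ract m a) = \<phi> m * a)}"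

text \<open>S = End_A(M), right A-linear endomorphisms, with multiplication = composition.\<close>
definition endo :: "('m::ab_group_add \<Rightarrow> 'a::ring_1 \<Rightarrow> 'm) \<Rightarrow> ('m \<Rightarrow> 'm) set" where
  "endo ract = {s. (\<forall>m m'. s (m + m') = s m + s m') \<and> (\<forall>m a. s (ract m a) = ract (s m) a)}"

definition dual_basis ::
  "('m::ab_group_add \<Rightarrow> 'a::ring_1 \<Rightarrow> 'm) \<Rightarrow> nat \<Rightarrow> (nat \<Rightarrow> 'm) \<Rightarrow> (nat \<Rightarrow> 'm \<Rightarrow> 'a) \<Rightarrow> bool" where
  "dual_basis ract n e es \<longleftrightarrow> (\<forall>i<n. es i \<in> dual ract) \<and> (\<forall>m. m = (\<Sum>i<n. ract (e i) (es i m)))"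

text \<open>Equality in C = M^* \<otimes>_B M; right B-action on M^* is (phi b)(m) = phi(b m).\<close>
definition tensorC :: "('b::ring_1 \<Rightarrow> 'm::ab_group_add \<Rightarrow> 'm) \<Rightarrow> ('m \<Rightarrow> 'a::ring_1 \<Rightarrow> 'm)
    \<Rightarrow> (('m \<Rightarrow> 'a) \<times> 'm) list \<Rightarrow> (('m \<Rightarrow> 'a) \<times> 'm) list \<Rightarrow> bool" where
  "tensorC lact ract = tensor_eq (dual ract) UNIV (\<lambda>\<phi> b. \<lambda>x. \<phi> (lact b x)) lact"

text \<open>A map gamma : C \<otimes>_A C = M^* \<otimes>_B M \<otimes>_A M^* \<otimes>_B M \<rightarrow> A is given by its values
  g phi m phi' m' = gamma(phi \<otimes> m \<otimes> phi' \<otimes> m'); the first conditions say exactly that g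
  induces a well-defined (A,A)-bimodule map on the tensor product; the last one is the
  pre-cointegral identity, for arbitrary elements c = sum_k phi_k \<otimes> m_k and
  c' = sum_l phi'_l \<otimes> m'_l of C, with the coproduct given by the dual basis.\<close>
definition comatrix_precointegral ::
  "('b::ring_1 \<Rightarrow> 'm::ab_group_add \<Rightarrow> 'm) \<Rightarrow> ('m \<Rightarrow> 'a::ring_1 \<Rightarrow> 'm) \<Rightarrow> nat \<Rightarrow> (nat \<Rightarrow> 'm)
     \<Rightarrow> (nat \<Rightarrow> 'm \<Rightarrow> 'a) \<Rightarrow> (('m \<Rightarrow> 'a) \<Rightarrow> 'm \<Rightarrow> ('m \<Rightarrow> 'a) \<Rightarrow> 'm \<Rightarrow> 'a) \<Rightarrow> bool" where
  "comatrix_precointegral lact ract n e es g \<longleftrightarrow>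
     (\<forall>\<phi>\<in>dual ract. \<forall>\<psi>\<in>dual ract. \<forall>\<phi>'\<in>dual ract. \<forall>m m'.
        g (\<phi> + \<psi>) m \<phi>' m' = g \<phi> m \<phi>' m' + g \<psi> m \<phi>' m') \<and>
     (\<forall>\<phi>\<in>dual ract. \<forall>\<phi>'\<in>dual ract. \<forall>m x m'.
        g \<phi> (m + x) \<phi>' m' = g \<phi> m \<phi>' m' + g \<phi> x \<phi>' m') \<and>
     (\<forall>\<phi>\<in>dual ract. \<forall>\<phi>'\<in>dual ract. \<forall>\<psi>\<in>dual ract. \<forall>m m'.
        g \<phi> m (\<phi>' + \<psi>) m' = g \<phi> m \<phi>' m' + g \<phi> m \<psi> m') \<and>
     (\<forall>\<phi>\<in>dual ract. \<forall>\<phi>'\<in>dual ract. \<forall>m m' x.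
        g \<phi> m \<phi>' (m' + x) = g \<phi> m \<phi>' m' + g \<phi> m \<phi>' x) \<and>
     (\<forall>\<phi>\<in>dual ract. \<forall>\<phi>'\<in>dual ract. \<forall>m m' b.
        g (\<lambda>x. \<phi> (lact b x)) m \<phi>' m' = g \<phi> (lact b m) \<phi>' m') \<and>
     (\<forall>\<phi>\<in>dual ract. \<forall>\<phi>'\<in>dual ract. \<forall>m m' a.
        g \<phi> (ract m a) \<phi>' m' = g \<phi> m (\<lambda>x. a * \<phi>' x) m') \<and>
     (\<forall>\<phi>\<in>dual ract. \<forall>\<phi>'\<in>dual ract. \<forall>m m' b.
        g \<phi> m (\<lambda>x. \<phi>' (lact b x)) m' = g \<phi> m \<phi>' (lact b m')) \<and>
     (\<forall>\<phi>\<in>dual ract. \<forall>\<phi>'\<in>dual ract. \<forall>m m' a.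
        g (\<lambda>x. a * \<phi> x) m \<phi>' m' = a * g \<phi> m \<phi>' m') \<and>
     (\<forall>\<phi>\<in>dual ract. \<forall>\<phi>'\<in>dual ract. \<forall>m m' a.
        g \<phi> m \<phi>' (ract m' a) = g \<phi> m \<phi>' m' * a) \<and>
     (\<forall>cs cs'. set cs \<subseteq> dual ract \<times> UNIV \<longrightarrow> set cs' \<subseteq> dual ract \<times> UNIV \<longrightarrow>
        tensorC lact ract
          [(\<phi>, ract (e i) (g (es i) m \<phi>' m')). (\<phi>, m) \<leftarrow> cs, (\<phi>', m') \<leftarrow> cs', i \<leftarrow> [0..<n]]
          [(\<lambda>x. g \<phi> m \<phi>' (e i) * es i x, m'). (\<phi>, m) \<leftarrow> cs, (\<phi>', m') \<leftarrow> cs', i \<leftarrow> [0..<n]])"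

text \<open>Equality in S \<otimes>_B S; B acts on S through b \<mapsto> (m \<mapsto> b m).\<close>
definition tensorD :: "('b::ring_1 \<Rightarrow> 'm::ab_group_add \<Rightarrow> 'm) \<Rightarrow> ('m \<Rightarrow> 'a::ring_1 \<Rightarrow> 'm)
    \<Rightarrow> (('m \<Rightarrow> 'm) \<times> ('m \<Rightarrow> 'm)) list \<Rightarrow> (('m \<Rightarrow> 'm) \<times> ('m \<Rightarrow> 'm)) list \<Rightarrow> bool" where
  "tensorD lact ract = tensor_eq (endo ract) (endo ract) (\<lambda>s b. s \<circ> lact b) (\<lambda>b s. lact b \<circ> s)"

text \<open>A map (S \<otimes>_B S) \<otimes>_S (S \<otimes>_B S) = S \<otimes>_B S \<otimes>_B S \<rightarrow> S is given by its values
  gt s s' s'' on simple tensors s \<otimes> s' \<otimes> s'' (where (s \<otimes> t) \<otimes>_S (u \<otimes> v) corresponds to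
  s \<otimes> t u \<otimes> v). The conditions: values in S, well-defined (additive and B-balanced),
  (S,S)-bimodule map, and the pre-cointegral identity for the Sweedler coproduct
  s \<otimes> s' \<mapsto> (s \<otimes> 1) \<otimes>_S (1 \<otimes> s'), for arbitrary d = sum_k s_k \<otimes> t_k, d' = sum_l u_l \<otimes> v_l:
  sum d_(1) gt(d_(2) \<otimes> d') = sum_{k,l} s_k \<otimes> gt(1, t_k u_l, v_l) and
  sum gt(d \<otimes> d'_(1)) d'_(2) = sum_{k,l} gt(s_k, t_k u_l, 1) \<otimes> v_l.\<close>
definition sweedler_precointegral ::
  "('b::ring_1 \<Rightarrow> 'm::ab_group_add \<Rightarrow> 'm) \<Rightarrow> ('m \<Rightarrow> 'a::ring_1 \<Rightarrow> 'm)
     \<Rightarrow> (('m \<Rightarrow> 'm) \<Rightarrow> ('m \<Rightarrow> 'm) \<Rightarrow> ('m \<Rightarrow> 'm) \<Rightarrow> ('m \<Rightarrow> 'm)) \<Rightarrow> bool" where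
  "sweedler_precointegral lact ract gt \<longleftrightarrow>
     (\<forall>s\<in>endo ract. \<forall>s'\<in>endo ract. \<forall>s''\<in>endo ract. gt s s' s'' \<in> endo ract) \<and>
     (\<forall>s\<in>endo ract. \<forall>t\<in>endo ract. \<forall>s'\<in>endo ract. \<forall>s''\<in>endo ract.
        gt (s + t) s' s'' = gt s s' s'' + gt t s' s'') \<and>
     (\<forall>s\<in>endo ract. \<forall>s'\<in>endo ract. \<forall>t\<in>endo ract. \<forall>s''\<in>endo ract.
        gt s (s' + t) s'' = gt s s' s'' + gt s t s'') \<and>
     (\<forall>s\<in>endo ract. \<forall>s'\<in>endo ract. \<forall>s''\<in>endo ract. \<forall>t\<in>endo ract.
        gt s s' (s'' + t) = gt s s' s'' + gt s s' t) \<and>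
     (\<forall>s\<in>endo ract. \<forall>s'\<in>endo ract. \<forall>s''\<in>endo ract. \<forall>b.
        gt (s \<circ> lact b) s' s'' = gt s (lact b \<circ> s') s'') \<and>
     (\<forall>s\<in>endo ract. \<forall>s'\<in>endo ract. \<forall>s''\<in>endo ract. \<forall>b.
        gt s (s' \<circ> lact b) s'' = gt s s' (lact b \<circ> s'')) \<and>
     (\<forall>u\<in>endo ract. \<forall>s\<in>endo ract. \<forall>s'\<in>endo ract. \<forall>s''\<in>endo ract.
        gt (u \<circ> s) s' s'' = u \<circ> gt s s' s'') \<and>
     (\<forall>u\<in>endo ract. \<forall>s\<in>endo ract. \<forall>s'\<in>endo ract. \<forall>s''\<in>endo ract.
        gt s s' (s'' \<circ> u) = gt s s' s'' \<circ> u) \<and>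
     (\<forall>ds ds'. set ds \<subseteq> endo ract \<times> endo ract \<longrightarrow> set ds' \<subseteq> endo ract \<times> endo ract \<longrightarrow>
        tensorD lact ract
          [(s, gt id (t \<circ> u) v). (s, t) \<leftarrow> ds, (u, v) \<leftarrow> ds']
          [(gt s (t \<circ> u) id, v). (s, t) \<leftarrow> ds, (u, v) \<leftarrow> ds'])"

text \<open>Under S \<cong> M \<otimes>_A M^* (inverse: s \<mapsto> sum_i s(e_i) \<otimes> e_i^*), the map
  M \<otimes> gamma \<otimes> M^* followed by M \<otimes>_A A \<otimes>_A M^* \<cong> M \<otimes>_A M^* \<cong> S is:\<close>
definition gtilde ::
  "('m::ab_group_add \<Rightarrow> 'a::ring_1 \<Rightarrow> 'm) \<Rightarrow> nat \<Rightarrow> (nat \<Rightarrow> 'm) \<Rightarrow> (nat \<Rightarrow> 'm \<Rightarrow> 'a)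
     \<Rightarrow> (('m \<Rightarrow> 'a) \<Rightarrow> 'm \<Rightarrow> ('m \<Rightarrow> 'a) \<Rightarrow> 'm \<Rightarrow> 'a)
     \<Rightarrow> ('m \<Rightarrow> 'm) \<Rightarrow> ('m \<Rightarrow> 'm) \<Rightarrow> ('m \<Rightarrow> 'm) \<Rightarrow> ('m \<Rightarrow> 'm)" where
  "gtilde ract n e es g s s' s'' =
     (\<lambda>x. \<Sum>i<n. \<Sum>j<n. \<Sum>k<n.
        ract (s (e i)) (g (es i) (s' (e j)) (es j) (s'' (e k)) * es k x))"

end

(* Identify S with M \<otimes>_A M^* via the dual basis: every s \<in> S is the sum of the rank-one maps
   x \<mapsto> s(e_i) e_i^*(x), and \<gamma>~ is M \<otimes> \<gamma> \<otimes> M^* read through this identification. Every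
   module-map property of \<gamma>~ then reduces to the corresponding property of \<gamma> after expanding
   along the dual basis; B-balancedness rests on the identity
   \<Sum>_j s(b e_j) \<otimes> e_j^* = \<Sum>_j s(e_j) \<otimes> e_j^* b in M \<otimes>_A M^*.
   For the pre-cointegral identity expand s = \<Sum>_i s(e_i) e_i^* and v = \<Sum>_k v(e_k) e_k^*. Then
   s \<otimes> \<gamma>~(1, w, v) and \<gamma>~(s, w, 1) \<otimes> v become sums over i, j, k of the images of the two
   sides of the comatrix pre-cointegral identity for c = e_i^* \<otimes> w(e_j), c' = e_j^* \<otimes> v(e_k)
   under the additive B-balanced map \<phi> \<otimes> m \<mapsto> s(e_i)\<phi> \<otimes> m e_k^* from M^* \<otimes>_B M to
   S \<otimes>_B S, which are equal because \<gamma> is a pre-cointegral. *)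

theory Submission
  imports Defs "HOL-Library.Multiset"
begin

section \<open>Formal sums modulo the balanced tensor relations\<close>

lemma formal_Nil [simp]: "formal [] = 0"
  by (simp add: formal_def)

lemma formal_Cons [simp]: "formal (x # xs) = fsingle x + formal xs"
  by (simp add: formal_def)

lemma formal_append [simp]: "formal (xs @ ys) = formal xs + formal ys"
  by (simp add: formal_def)

lemma formal_concat: "formal (concat xss) = sum_list (map formal xss)"
  by (induction xss) simp_all

lemma formal_map_upt: "formal (map f [0..<n]) = (\<Sum>a<n. fsingle (f a))"
  by (induction n) simp_all

lemma formal_eq_count: "formal xs = (\<lambda>q. int (count (mset xs) q))"
  by (induction xs) (auto simp: fsingle_def fun_eq_iff)

lemma formal_eq_iff_mset: "formal xs = formal ys \<longleftrightarrow> mset xs = mset ys"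
  by (auto simp: formal_eq_count fun_eq_iff multiset_eqI)

definition add_submonoid :: "'a::monoid_add set \<Rightarrow> bool" where
  "add_submonoid X \<longleftrightarrow> 0 \<in> X \<and> (\<forall>x\<in>X. \<forall>x'\<in>X. x + x' \<in> X)"

lemma add_submonoid_zero: "add_submonoid X \<Longrightarrow> 0 \<in> X"
  by (simp add: add_submonoid_def)

lemma add_submonoid_UNIV: "add_submonoid UNIV"
  by (simp add: add_submonoid_def)

lemma add_submonoid_sum:
  assumes "add_submonoid X" "\<And>i. i \<in> I \<Longrightarrow> f i \<in> X"
  shows "sum f I \<in> X"
  using assms(2)
  by (induction I rule: infinite_finite_induct) (use assms(1) in \<open>auto simp: add_submonoid_def\<close>)

lemma additive_on_sum:
  fixes f :: "'a::comm_monoid_add \<Rightarrow> 'b::ab_group_add"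
  assumes "add_submonoid X" "\<And>x y. x \<in> X \<Longrightarrow> y \<in> X \<Longrightarrow> f (x + y) = f x + f y"
    and "\<And>i. i \<in> I \<Longrightarrow> u i \<in> X"
  shows "f (\<Sum>i\<in>I. u i) = (\<Sum>i\<in>I. f (u i))"
proof -
  have "f 0 = 0"
    using assms(2)[of 0 0] add_submonoid_zero[OF assms(1)] by simp
  with assms show ?thesis
    by (induction I rule: infinite_finite_induct) (simp_all add: add_submonoid_sum)
qed

lemma sum_fun_apply: "(\<Sum>i\<in>I. f i) x = (\<Sum>i\<in>I. f i x)"
  by (induction I rule: infinite_finite_induct) simp_all

lemma sum_cartesian_product3: "(\<Sum>p\<in>A \<times> B \<times> C. f p) = (\<Sum>a\<in>A. \<Sum>b\<in>B. \<Sum>c\<in>C. f (a, b, c))"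
  by (simp add: sum.cartesian_product)

lemma sum_rotate3: "(\<Sum>a\<in>A. \<Sum>b\<in>B. \<Sum>c\<in>C. f a b c) = (\<Sum>b\<in>B. \<Sum>c\<in>C. \<Sum>a\<in>A. f a b c)"
  by (subst sum.swap) (simp add: sum.swap[of _ A])

lemma diff_eq_diff_iff_add_eq: "a - b = c - d \<longleftrightarrow> a + d = c + (b::'a::ab_group_add)"
  by (simp add: algebra_simps)

definition tensor_cong ::
  "'x::ab_group_add set \<Rightarrow> 'y::ab_group_add set \<Rightarrow> ('x \<Rightarrow> 'r \<Rightarrow> 'x) \<Rightarrow> ('r \<Rightarrow> 'y \<Rightarrow> 'y)
     \<Rightarrow> ('x \<times> 'y \<Rightarrow> int) \<Rightarrow> ('x \<times> 'y \<Rightarrow> int) \<Rightarrow> bool" where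
  "tensor_cong X Y rx ly u v \<longleftrightarrow> u - v \<in> tensor_rels X Y rx ly"

lemma tensor_eq_iff_cong: "tensor_eq X Y rx ly xs ys \<longleftrightarrow> tensor_cong X Y rx ly (formal xs) (formal ys)"
  by (simp add: tensor_eq_def tensor_cong_def)

lemma tensor_cong_refl: "tensor_cong X Y rx ly u u"
  using tensor_rels.zero by (simp add: tensor_cong_def)

lemma tensor_cong_sym: "tensor_cong X Y rx ly u v \<Longrightarrow> tensor_cong X Y rx ly v u"
  unfolding tensor_cong_def by (metis tensor_rels.neg minus_diff_eq)

lemma tensor_cong_trans [trans]:
  assumes "tensor_cong X Y rx ly u v" "tensor_cong X Y rx ly v w"
  shows "tensor_cong X Y rx ly u w"
proof -
  have "(u - v) + (v - w) \<in> tensor_rels X Y rx ly"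
    using assms unfolding tensor_cong_def by (rule tensor_rels.add)
  then show ?thesis
    by (simp add: tensor_cong_def)
qed

lemma tensor_cong_add:
  assumes "tensor_cong X Y rx ly u v" "tensor_cong X Y rx ly u' v'"
  shows "tensor_cong X Y rx ly (u + u') (v + v')"
proof -
  have "(u - v) + (u' - v') \<in> tensor_rels X Y rx ly"
    using assms unfolding tensor_cong_def by (rule tensor_rels.add)
  then show ?thesis
    by (simp add: tensor_cong_def algebra_simps)
qed

lemma tensor_cong_sum:
  "(\<And>i. i \<in> I \<Longrightarrow> tensor_cong X Y rx ly (f i) (h i)) \<Longrightarrow>
    tensor_cong X Y rx ly (\<Sum>i\<in>I. f i) (\<Sum>i\<in>I. h i)"
  by (induction I rule: infinite_finite_induct) (simp_all add: tensor_cong_refl tensor_cong_add)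

lemma tensor_cong_sum_list:
  "(\<And>x. x \<in> set xs \<Longrightarrow> tensor_cong X Y rx ly (f x) (h x)) \<Longrightarrow>
    tensor_cong X Y rx ly (sum_list (map f xs)) (sum_list (map h xs))"
  by (induction xs) (simp_all add: tensor_cong_refl tensor_cong_add)

lemma tensor_cong_fsingle_zero_left:
  assumes "0 \<in> X" "y \<in> Y"
  shows "tensor_cong X Y rx ly (fsingle (0, y)) 0"
proof -
  have "- (fsingle (0 + 0, y) - fsingle (0, y) - fsingle (0, y)) \<in> tensor_rels X Y rx ly"
    using assms by (intro tensor_rels.neg tensor_rels.addl)
  then show ?thesis
    by (simp add: tensor_cong_def)
qed

lemma tensor_cong_fsingle_zero_right:
  assumes "x \<in> X" "0 \<in> Y"
  shows "tensor_cong X Y rx ly (fsingle (x, 0)) 0"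
proof -
  have "- (fsingle (x, 0 + 0) - fsingle (x, 0) - fsingle (x, 0)) \<in> tensor_rels X Y rx ly"
    using assms by (intro tensor_rels.neg tensor_rels.addr)
  then show ?thesis
    by (simp add: tensor_cong_def)
qed

lemma tensor_cong_fsingle_sum_left:
  assumes "add_submonoid X" "\<And>i. i \<in> I \<Longrightarrow> x i \<in> X" "y \<in> Y"
  shows "tensor_cong X Y rx ly (fsingle (\<Sum>i\<in>I. x i, y)) (\<Sum>i\<in>I. fsingle (x i, y))"
  using assms(2)
proof (induction I rule: infinite_finite_induct)
  case (infinite I)
  then show ?case
    using tensor_cong_fsingle_zero_left[OF add_submonoid_zero[OF assms(1)] assms(3)]
    by (simp only: sum.infinite[OF infinite.hyps])
next
  case empty
  then show ?case
    using tensor_cong_fsingle_zero_left[OF add_submonoid_zero[OF assms(1)] assms(3)]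
    by (simp only: sum.empty)
next
  case (insert a F)
  have "x a \<in> X" "sum x F \<in> X"
    using insert.prems assms(1) by (auto intro: add_submonoid_sum)
  then have "tensor_cong X Y rx ly (fsingle (x a + sum x F, y)) (fsingle (x a, y) + fsingle (sum x F, y))"
    using tensor_rels.addl[of "x a" X "sum x F" y Y rx ly] assms(3)
    by (simp add: tensor_cong_def diff_diff_eq)
  also have "tensor_cong X Y rx ly \<dots> (fsingle (x a, y) + (\<Sum>i\<in>F. fsingle (x i, y)))"
    using insert by (intro tensor_cong_add tensor_cong_refl) auto
  finally show ?case
    by (simp only: sum.insert[OF insert.hyps])
qed

lemma tensor_cong_fsingle_sum_right:
  assumes "add_submonoid Y" "x \<in> X" "\<And>j. j \<in> J \<Longrightarrow> y j \<in> Y"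
  shows "tensor_cong X Y rx ly (fsingle (x, \<Sum>j\<in>J. y j)) (\<Sum>j\<in>J. fsingle (x, y j))"
  using assms(3)
proof (induction J rule: infinite_finite_induct)
  case (infinite J)
  then show ?case
    using tensor_cong_fsingle_zero_right[OF assms(2) add_submonoid_zero[OF assms(1)]]
    by (simp only: sum.infinite[OF infinite.hyps])
next
  case empty
  then show ?case
    using tensor_cong_fsingle_zero_right[OF assms(2) add_submonoid_zero[OF assms(1)]]
    by (simp only: sum.empty)
next
  case (insert a F)
  have "y a \<in> Y" "sum y F \<in> Y"
    using insert.prems assms(1) by (auto intro: add_submonoid_sum)
  then have "tensor_cong X Y rx ly (fsingle (x, y a + sum y F)) (fsingle (x, y a) + fsingle (x, sum y F))"
    using tensor_rels.addr[of x X "y a" Y "sum y F" rx ly] assms(2)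
    by (simp add: tensor_cong_def diff_diff_eq)
  also have "tensor_cong X Y rx ly \<dots> (fsingle (x, y a) + (\<Sum>j\<in>F. fsingle (x, y j)))"
    using insert by (intro tensor_cong_add tensor_cong_refl) auto
  finally show ?case
    by (simp only: sum.insert[OF insert.hyps])
qed

lemma tensor_cong_fsingle_sum:
  assumes "add_submonoid X" "add_submonoid Y"
    and "\<And>i. i \<in> I \<Longrightarrow> x i \<in> X" "\<And>j. j \<in> J \<Longrightarrow> y j \<in> Y"
  shows "tensor_cong X Y rx ly (fsingle (\<Sum>i\<in>I. x i, \<Sum>j\<in>J. y j)) (\<Sum>i\<in>I. \<Sum>j\<in>J. fsingle (x i, y j))"
proof -
  have "tensor_cong X Y rx ly (fsingle (\<Sum>i\<in>I. x i, \<Sum>j\<in>J. y j)) (\<Sum>i\<in>I. fsingle (x i, \<Sum>j\<in>J. y j))"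
    using assms by (intro tensor_cong_fsingle_sum_left add_submonoid_sum)
  also have "tensor_cong X Y rx ly \<dots> (\<Sum>i\<in>I. \<Sum>j\<in>J. fsingle (x i, y j))"
    using assms by (intro tensor_cong_sum tensor_cong_fsingle_sum_right)
  finally show ?thesis .
qed

lemma tensor_rels_map:
  assumes "u \<in> tensor_rels X Y rx ly"
    and "\<And>x. x \<in> X \<Longrightarrow> L x \<in> X'" "\<And>y. y \<in> Y \<Longrightarrow> R y \<in> Y'"
    and "\<And>x x'. x \<in> X \<Longrightarrow> x' \<in> X \<Longrightarrow> L (x + x') = L x + L x'"
    and "\<And>y y'. y \<in> Y \<Longrightarrow> y' \<in> Y \<Longrightarrow> R (y + y') = R y + R y'"
    and "\<And>x r. x \<in> X \<Longrightarrow> L (rx x r) = rx' (L x) r"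
    and "\<And>y r. y \<in> Y \<Longrightarrow> R (ly r y) = ly' r (R y)"
  shows "\<exists>xs ys. u = formal xs - formal ys \<and>
    tensor_eq X' Y' rx' ly' (map (map_prod L R) xs) (map (map_prod L R) ys)"
  using assms(1)
proof induction
  case zero
  show ?case
    by (rule exI[of _ "[]"], rule exI[of _ "[]"]) (simp add: tensor_eq_iff_cong tensor_cong_refl)
next
  case (add u v)
  then obtain xs ys xs' ys' where
    uv: "u = formal xs - formal ys" "v = formal xs' - formal ys'"
    and "tensor_eq X' Y' rx' ly' (map (map_prod L R) xs) (map (map_prod L R) ys)"
    and "tensor_eq X' Y' rx' ly' (map (map_prod L R) xs') (map (map_prod L R) ys')"
    by blast
  then have "tensor_eq X' Y' rx' ly' (map (map_prod L R) (xs @ xs')) (map (map_prod L R) (ys @ ys'))"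
    by (simp add: tensor_eq_iff_cong tensor_cong_add)
  moreover have "u + v = formal (xs @ xs') - formal (ys @ ys')"
    by (simp add: uv algebra_simps)
  ultimately show ?case
    by blast
next
  case (neg u)
  then obtain xs ys where "u = formal xs - formal ys"
    and "tensor_eq X' Y' rx' ly' (map (map_prod L R) xs) (map (map_prod L R) ys)"
    by blast
  then have "- u = formal ys - formal xs"
    and "tensor_eq X' Y' rx' ly' (map (map_prod L R) ys) (map (map_prod L R) xs)"
    by (simp_all add: tensor_eq_iff_cong tensor_cong_sym)
  then show ?case
    by blast
next
  case (addl x x' y)
  show ?case
    by (rule exI[of _ "[(x + x', y)]"], rule exI[of _ "[(x, y), (x', y)]"])
      (simp add: tensor_eq_def diff_diff_eq[symmetric] tensor_rels.addl addl assms(2-7))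
next
  case (addr x y y')
  show ?case
    by (rule exI[of _ "[(x, y + y')]"], rule exI[of _ "[(x, y), (x, y')]"])
      (simp add: tensor_eq_def diff_diff_eq[symmetric] tensor_rels.addr addr assms(2-7))
next
  case (bal x y r)
  show ?case
    by (rule exI[of _ "[(rx x r, y)]"], rule exI[of _ "[(x, ly r y)]"])
      (simp add: tensor_eq_def tensor_rels.bal bal assms(2-7))
qed

lemma tensor_eq_map:
  assumes "tensor_eq X Y rx ly xs ys"
    and "\<And>x. x \<in> X \<Longrightarrow> L x \<in> X'" "\<And>y. y \<in> Y \<Longrightarrow> R y \<in> Y'"
    and "\<And>x x'. x \<in> X \<Longrightarrow> x' \<in> X \<Longrightarrow> L (x + x') = L x + L x'"
    and "\<And>y y'. y \<in> Y \<Longrightarrow> y' \<in> Y \<Longrightarrow> R (y + y') = R y + R y'"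
    and "\<And>x r. x \<in> X \<Longrightarrow> L (rx x r) = rx' (L x) r"
    and "\<And>y r. y \<in> Y \<Longrightarrow> R (ly r y) = ly' r (R y)"
  shows "tensor_eq X' Y' rx' ly' (map (map_prod L R) xs) (map (map_prod L R) ys)"
proof -
  have "formal xs - formal ys \<in> tensor_rels X Y rx ly"
    using assms(1) by (simp only: tensor_eq_def)
  from tensor_rels_map[OF this, of L X' R Y' rx' ly'] assms(2-7)
  obtain as bs where diff: "formal xs - formal ys = formal as - formal bs"
    and mapped: "tensor_eq X' Y' rx' ly' (map (map_prod L R) as) (map (map_prod L R) bs)"
    by blast
  from diff have "formal (xs @ bs) = formal (as @ ys)"
    by (simp only: formal_append diff_eq_diff_iff_add_eq)
  then have "formal (map (map_prod L R) (xs @ bs)) = formal (map (map_prod L R) (as @ ys))"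
    by (simp only: formal_eq_iff_mset mset_map)
  then have "formal (map (map_prod L R) xs) - formal (map (map_prod L R) ys)
      = formal (map (map_prod L R) as) - formal (map (map_prod L R) bs)"
    by (simp only: map_append formal_append diff_eq_diff_iff_add_eq)
  with mapped show ?thesis
    unfolding tensor_eq_def by (simp only:)
qed

text \<open>The endomorphism of M corresponding to m \<otimes> \<phi> \<in> M \<otimes>_A M^*.\<close>

definition rank_one :: "('m \<Rightarrow> 'a \<Rightarrow> 'm) \<Rightarrow> 'm \<Rightarrow> ('m \<Rightarrow> 'a) \<Rightarrow> 'm \<Rightarrow> 'm" where
  "rank_one ract m \<phi> = (\<lambda>x. ract m (\<phi> x))"

locale dual_basis_bimodule =
  fixes lact :: "'b::ring_1 \<Rightarrow> 'm::ab_group_add \<Rightarrow> 'm"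
    and ract :: "'m \<Rightarrow> 'a::ring_1 \<Rightarrow> 'm"
    and n :: nat and e :: "nat \<Rightarrow> 'm" and es :: "nat \<Rightarrow> 'm \<Rightarrow> 'a"
  assumes bimodule: "bimodule lact ract"
    and dual_basis: "dual_basis ract n e es"
begin

lemma ract_add_left: "ract (m + m') a = ract m a + ract m' a"
  using bimodule by (simp add: bimodule_def)

lemma ract_add_right: "ract m (a + a') = ract m a + ract m a'"
  using bimodule by (simp add: bimodule_def)

lemma ract_mult: "ract m (a * a') = ract (ract m a) a'"
  using bimodule by (simp add: bimodule_def)

lemma ract_zero_left [simp]: "ract 0 a = 0"
  using ract_add_left[of 0 0 a] by simp

lemma ract_sum_right: "ract m (\<Sum>i\<in>I. f i) = (\<Sum>i\<in>I. ract m (f i))"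
  by (rule additive_on_sum[OF add_submonoid_UNIV]) (simp_all add: ract_add_right)

lemma lact_add: "lact b (m + m') = lact b m + lact b m'"
  using bimodule by (simp add: bimodule_def)

lemma lact_ract: "lact b (ract m a) = ract (lact b m) a"
  using bimodule by (simp add: bimodule_def)

lemma dual_add: "\<phi> \<in> dual ract \<Longrightarrow> \<phi> (m + m') = \<phi> m + \<phi> m'"
  by (simp add: dual_def)

lemma dual_ract: "\<phi> \<in> dual ract \<Longrightarrow> \<phi> (ract m a) = \<phi> m * a"
  by (simp add: dual_def)

lemma dual_sum: "\<phi> \<in> dual ract \<Longrightarrow> \<phi> (\<Sum>i\<in>I. f i) = (\<Sum>i\<in>I. \<phi> (f i))"
  by (rule additive_on_sum[OF add_submonoid_UNIV]) (simp_all add: dual_add)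

lemma add_submonoid_dual: "add_submonoid (dual ract)"
  by (simp add: add_submonoid_def dual_def distrib_right)

lemma dual_scale: "\<phi> \<in> dual ract \<Longrightarrow> (\<lambda>x. c * \<phi> x) \<in> dual ract"
  by (simp add: dual_def distrib_left mult.assoc)

lemma dual_comp_endo: "\<phi> \<in> dual ract \<Longrightarrow> t \<in> endo ract \<Longrightarrow> (\<lambda>x. \<phi> (t x)) \<in> dual ract"
  by (simp add: dual_def endo_def)

lemma endo_add: "s \<in> endo ract \<Longrightarrow> s (m + m') = s m + s m'"
  by (simp add: endo_def)

lemma endo_ract: "s \<in> endo ract \<Longrightarrow> s (ract m a) = ract (s m) a"
  by (simp add: endo_def)

lemma endo_sum: "s \<in> endo ract \<Longrightarrow> s (\<Sum>i\<in>I. f i) = (\<Sum>i\<in>I. s (f i))"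
  by (rule additive_on_sum[OF add_submonoid_UNIV]) (simp_all add: endo_add)

lemma add_submonoid_endo: "add_submonoid (endo ract)"
  by (simp add: add_submonoid_def endo_def ract_add_left)

lemma endo_comp: "s \<in> endo ract \<Longrightarrow> t \<in> endo ract \<Longrightarrow> s \<circ> t \<in> endo ract"
  by (simp add: endo_def)

lemma endo_lact: "lact b \<in> endo ract"
  by (simp add: endo_def lact_add lact_ract)

lemma rank_one_endo: "\<phi> \<in> dual ract \<Longrightarrow> rank_one ract m \<phi> \<in> endo ract"
  by (simp add: endo_def rank_one_def dual_add dual_ract ract_add_right ract_mult)

lemma rank_one_add_left: "rank_one ract (m + m') \<phi> = rank_one ract m \<phi> + rank_one ract m' \<phi>"
  by (simp add: rank_one_def fun_eq_iff ract_add_left)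

lemma rank_one_add_right: "rank_one ract m (\<phi> + \<psi>) = rank_one ract m \<phi> + rank_one ract m \<psi>"
  by (simp add: rank_one_def fun_eq_iff ract_add_right)

lemma rank_one_scale: "rank_one ract m (\<lambda>x. c * \<phi> x) = rank_one ract (ract m c) \<phi>"
  by (simp add: rank_one_def ract_mult)

lemma rank_one_lact: "rank_one ract (lact b m) \<phi> = lact b \<circ> rank_one ract m \<phi>"
  by (simp add: rank_one_def fun_eq_iff lact_ract)

lemma rank_one_comp_lact: "rank_one ract m (\<lambda>x. \<phi> (lact b x)) = rank_one ract m \<phi> \<circ> lact b"
  by (simp add: rank_one_def fun_eq_iff)

lemma es_dual: "k < n \<Longrightarrow> es k \<in> dual ract"
  using dual_basis by (simp add: dual_basis_def)

lemma dual_basis_expansion: "m = (\<Sum>k<n. ract (e k) (es k m))"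
  using dual_basis by (simp add: dual_basis_def)

lemma dual_eq_sum: "\<phi> \<in> dual ract \<Longrightarrow> \<phi> m = (\<Sum>k<n. \<phi> (e k) * es k m)"
  by (subst dual_basis_expansion) (simp add: dual_sum dual_ract)

lemma endo_eq_sum: "s \<in> endo ract \<Longrightarrow> s m = (\<Sum>k<n. ract (s (e k)) (es k m))"
  by (subst dual_basis_expansion) (simp add: endo_sum endo_ract)

lemma endo_eq_sum_rank_one: "s \<in> endo ract \<Longrightarrow> s = (\<Sum>k<n. rank_one ract (s (e k)) (es k))"
  by (rule ext) (simp add: rank_one_def sum_fun_apply endo_eq_sum)

text \<open>The identity \<Sum>_j s(t e_j) \<otimes> e_j^* = \<Sum>_j s(e_j) \<otimes> e_j^* t in M \<otimes>_A M^* (both sides represent s \<circ> t),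
  seen through an arbitrary biadditive A-balanced map \<open>h\<close> out of M \<times> M^*.\<close>

lemma sum_dual_basis_comp_endo:
  fixes h :: "'m \<Rightarrow> ('m \<Rightarrow> 'a) \<Rightarrow> 'c::ab_group_add"
  assumes s: "s \<in> endo ract" and t: "t \<in> endo ract"
    and h_add_left: "\<And>p p' \<phi>. \<phi> \<in> dual ract \<Longrightarrow> h (p + p') \<phi> = h p \<phi> + h p' \<phi>"
    and h_add_right: "\<And>p \<phi> \<psi>. \<phi> \<in> dual ract \<Longrightarrow> \<psi> \<in> dual ract \<Longrightarrow> h p (\<phi> + \<psi>) = h p \<phi> + h p \<psi>"
    and h_balanced: "\<And>p a \<phi>. \<phi> \<in> dual ract \<Longrightarrow> h (ract p a) \<phi> = h p (\<lambda>x. a * \<phi> x)"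
  shows "(\<Sum>j<n. h (s (t (e j))) (es j)) = (\<Sum>j<n. h (s (e j)) (\<lambda>x. es j (t x)))"
proof -
  have es_comp_t: "(\<lambda>x. es j (t x)) = (\<Sum>l<n. (\<lambda>x. es j (t (e l)) * es l x))" if "j < n" for j
    unfolding sum_fun_apply by (rule ext, rule dual_eq_sum[OF dual_comp_endo[OF es_dual[OF that] t]])
  have "h (s (e j)) (\<lambda>x. es j (t x)) = (\<Sum>l<n. h (s (e j)) (\<lambda>x. es j (t (e l)) * es l x))"
    if "j < n" for j
    unfolding es_comp_t[OF that]
    by (intro additive_on_sum[where f = "h (s (e j))" and X = "dual ract"]
        add_submonoid_dual h_add_right dual_scale es_dual) auto
  then have "(\<Sum>j<n. h (s (e j)) (\<lambda>x. es j (t x)))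
      = (\<Sum>j<n. \<Sum>l<n. h (s (e j)) (\<lambda>x. es j (t (e l)) * es l x))"
    by simp
  also have "\<dots> = (\<Sum>j<n. \<Sum>l<n. h (ract (s (e j)) (es j (t (e l)))) (es l))"
    by (simp add: h_balanced es_dual)
  also have "\<dots> = (\<Sum>l<n. \<Sum>j<n. h (ract (s (e j)) (es j (t (e l)))) (es l))"
    by (rule sum.swap)
  also have "\<dots> = (\<Sum>l<n. h (\<Sum>j<n. ract (s (e j)) (es j (t (e l)))) (es l))"
    by (intro sum.cong refl additive_on_sum[OF add_submonoid_UNIV, symmetric]) (simp_all add: h_add_left es_dual)
  also have "\<dots> = (\<Sum>l<n. h (s (t (e l))) (es l))"
    by (simp add: endo_eq_sum[OF s, symmetric])
  finally show ?thesis ..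
qed

abbreviation sweedler_cong where
  "sweedler_cong \<equiv> tensor_cong (endo ract) (endo ract) (\<lambda>s b. s \<circ> lact b) (\<lambda>b s. lact b \<circ> s)"

lemma tensorD_iff_sweedler_cong: "tensorD lact ract xs ys \<longleftrightarrow> sweedler_cong (formal xs) (formal ys)"
  by (simp add: tensorD_def tensor_eq_iff_cong)

lemma gtilde_eq_sum_rank_one: "gtilde ract n e es g s s' s'' =
    (\<Sum>i<n. \<Sum>j<n. \<Sum>k<n. rank_one ract (ract (s (e i)) (g (es i) (s' (e j)) (es j) (s'' (e k)))) (es k))"
  by (simp add: gtilde_def rank_one_def fun_eq_iff sum_fun_apply ract_mult)

lemma gtilde_endo: "gtilde ract n e es g s s' s'' \<in> endo ract"
  unfolding gtilde_eq_sum_rank_one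
  by (intro add_submonoid_sum add_submonoid_endo rank_one_endo) (simp add: es_dual)

lemma gtilde_add1:
  "gtilde ract n e es g (s + t) s' s'' = gtilde ract n e es g s s' s'' + gtilde ract n e es g t s' s''"
  by (simp add: gtilde_def fun_eq_iff ract_add_left sum.distrib)

lemma gtilde_comp_left:
  "u \<in> endo ract \<Longrightarrow> gtilde ract n e es g (u \<circ> s) s' s'' = u \<circ> gtilde ract n e es g s s' s''"
  by (simp add: gtilde_def fun_eq_iff endo_sum endo_ract)

end

section \<open>The induced pre-cointegral on the Sweedler coring\<close>

locale comatrix_precointegral_setting = dual_basis_bimodule +
  fixes g
  assumes comatrix_precointegral: "comatrix_precointegral lact ract n e es g"
begin

lemma g_add1: "\<phi> \<in> dual ract \<Longrightarrow> \<psi> \<in> dual ract \<Longrightarrow> \<phi>' \<in> dual ract \<Longrightarrow>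
    g (\<phi> + \<psi>) m \<phi>' m' = g \<phi> m \<phi>' m' + g \<psi> m \<phi>' m'"
  using comatrix_precointegral by (simp add: comatrix_precointegral_def)

lemma g_add2: "\<phi> \<in> dual ract \<Longrightarrow> \<phi>' \<in> dual ract \<Longrightarrow>
    g \<phi> (m + x) \<phi>' m' = g \<phi> m \<phi>' m' + g \<phi> x \<phi>' m'"
  using comatrix_precointegral by (simp add: comatrix_precointegral_def)

lemma g_add3: "\<phi> \<in> dual ract \<Longrightarrow> \<phi>' \<in> dual ract \<Longrightarrow> \<psi> \<in> dual ract \<Longrightarrow>
    g \<phi> m (\<phi>' + \<psi>) m' = g \<phi> m \<phi>' m' + g \<phi> m \<psi> m'"
  using comatrix_precointegral by (simp add: comatrix_precointegral_def)

lemma g_add4: "\<phi> \<in> dual ract \<Longrightarrow> \<phi>' \<in> dual ract \<Longrightarrow>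
    g \<phi> m \<phi>' (m' + x) = g \<phi> m \<phi>' m' + g \<phi> m \<phi>' x"
  using comatrix_precointegral by (simp add: comatrix_precointegral_def)

lemma g_lact12: "\<phi> \<in> dual ract \<Longrightarrow> \<phi>' \<in> dual ract \<Longrightarrow>
    g (\<lambda>x. \<phi> (lact b x)) m \<phi>' m' = g \<phi> (lact b m) \<phi>' m'"
  using comatrix_precointegral by (simp add: comatrix_precointegral_def)

lemma g_ract23: "\<phi> \<in> dual ract \<Longrightarrow> \<phi>' \<in> dual ract \<Longrightarrow>
    g \<phi> (ract m a) \<phi>' m' = g \<phi> m (\<lambda>x. a * \<phi>' x) m'"
  using comatrix_precointegral by (simp add: comatrix_precointegral_def)

lemma g_lact34: "\<phi> \<in> dual ract \<Longrightarrow> \<phi>' \<in> dual ract \<Longrightarrow>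
    g \<phi> m (\<lambda>x. \<phi>' (lact b x)) m' = g \<phi> m \<phi>' (lact b m')"
  using comatrix_precointegral by (simp add: comatrix_precointegral_def)

lemma g_scale1: "\<phi> \<in> dual ract \<Longrightarrow> \<phi>' \<in> dual ract \<Longrightarrow>
    g (\<lambda>x. a * \<phi> x) m \<phi>' m' = a * g \<phi> m \<phi>' m'"
  using comatrix_precointegral by (simp add: comatrix_precointegral_def)

lemma g_ract4: "\<phi> \<in> dual ract \<Longrightarrow> \<phi>' \<in> dual ract \<Longrightarrow>
    g \<phi> m \<phi>' (ract m' a) = g \<phi> m \<phi>' m' * a"
  using comatrix_precointegral by (simp add: comatrix_precointegral_def)

lemma g_comp_endo_dual:
  "\<phi> \<in> dual ract \<Longrightarrow> \<phi>' \<in> dual ract \<Longrightarrow> t \<in> endo ract \<Longrightarrow> (\<lambda>m'. g \<phi> m \<phi>' (t m')) \<in> dual ract"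
  by (simp add: dual_def endo_add endo_ract g_add4 g_ract4)

lemma g_precointegral: "set cs \<subseteq> dual ract \<times> UNIV \<Longrightarrow> set cs' \<subseteq> dual ract \<times> UNIV \<Longrightarrow>
    tensorC lact ract
      [(\<phi>, ract (e i) (g (es i) m \<phi>' m')). (\<phi>, m) \<leftarrow> cs, (\<phi>', m') \<leftarrow> cs', i \<leftarrow> [0..<n]]
      [(\<lambda>x. g \<phi> m \<phi>' (e i) * es i x, m'). (\<phi>, m) \<leftarrow> cs, (\<phi>', m') \<leftarrow> cs', i \<leftarrow> [0..<n]]"
  using comatrix_precointegral by (simp add: comatrix_precointegral_def)

lemma g_precointegral_single:
  assumes "\<phi> \<in> dual ract" "\<phi>' \<in> dual ract"
  shows "tensorC lact ract
    (map (\<lambda>a. (\<phi>, ract (e a) (g (es a) m \<phi>' m'))) [0..<n])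
    (map (\<lambda>a. (\<lambda>x. g \<phi> m \<phi>' (e a) * es a x, m')) [0..<n])"
  using g_precointegral[of "[(\<phi>, m)]" "[(\<phi>', m')]"] assms by simp

text \<open>The image of the comatrix pre-cointegral identity for c = \<phi> \<otimes> m and c' = \<phi>' \<otimes> m' under the
  map \<phi> \<otimes> m \<mapsto> p\<phi> \<otimes> m\<psi> from M^* \<otimes>_B M to S \<otimes>_B S.\<close>

lemma rank_one_precointegral:
  assumes "\<phi> \<in> dual ract" "\<phi>' \<in> dual ract" "\<psi> \<in> dual ract"
  shows "sweedler_cong
    (\<Sum>a<n. fsingle (rank_one ract p \<phi>, rank_one ract (ract (e a) (g (es a) m \<phi>' m')) \<psi>))
    (\<Sum>a<n. fsingle (rank_one ract (ract p (g \<phi> m \<phi>' (e a))) (es a), rank_one ract m' \<psi>))"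
proof -
  have "tensor_eq (endo ract) (endo ract) (\<lambda>s b. s \<circ> lact b) (\<lambda>b s. lact b \<circ> s)
    (map (map_prod (rank_one ract p) (\<lambda>m. rank_one ract m \<psi>))
      (map (\<lambda>a. (\<phi>, ract (e a) (g (es a) m \<phi>' m'))) [0..<n]))
    (map (map_prod (rank_one ract p) (\<lambda>m. rank_one ract m \<psi>))
      (map (\<lambda>a. (\<lambda>x. g \<phi> m \<phi>' (e a) * es a x, m')) [0..<n]))"
    using g_precointegral_single[OF assms(1,2), of m m'] unfolding tensorC_def
    by (rule tensor_eq_map)
      (simp_all add: rank_one_endo assms(3) rank_one_add_left rank_one_add_right rank_one_lact
        rank_one_comp_lact)
  then show ?thesis
    by (simp add: tensor_eq_iff_cong formal_map_upt rank_one_scale)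
qed

abbreviation gt where "gt \<equiv> gtilde ract n e es g"

lemma gtilde_add2: "gt s (s' + t) s'' = gt s s' s'' + gt s t s''"
  by (simp add: gtilde_def fun_eq_iff g_add2 es_dual distrib_right ract_add_right sum.distrib)

lemma gtilde_add3: "gt s s' (s'' + t) = gt s s' s'' + gt s s' t"
  by (simp add: gtilde_def fun_eq_iff g_add4 es_dual distrib_right ract_add_right sum.distrib)

lemma gtilde_balanced12:
  assumes s: "s \<in> endo ract"
  shows "gt (s \<circ> lact b) s' s'' = gt s (lact b \<circ> s') s''"
proof
  fix x
  define h where "h p \<phi> = (\<Sum>j<n. \<Sum>k<n. ract p (g \<phi> (s' (e j)) (es j) (s'' (e k)) * es k x))" for p \<phi>
  have "gt (s \<circ> lact b) s' s'' x = (\<Sum>i<n. h (s (lact b (e i))) (es i))"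
    by (simp add: gtilde_def h_def)
  also have "\<dots> = (\<Sum>i<n. h (s (e i)) (\<lambda>y. es i (lact b y)))"
    by (rule sum_dual_basis_comp_endo[OF s endo_lact]; simp only: h_def)
      (simp_all add: ract_add_left ract_add_right g_add1 g_scale1 es_dual distrib_right
        ract_mult mult.assoc sum.distrib)
  also have "\<dots> = gt s (lact b \<circ> s') s'' x"
    by (simp add: gtilde_def h_def g_lact12 es_dual)
  finally show "gt (s \<circ> lact b) s' s'' x = gt s (lact b \<circ> s') s'' x" .
qed

lemma gtilde_balanced23:
  assumes s': "s' \<in> endo ract"
  shows "gt s (s' \<circ> lact b) s'' = gt s s' (lact b \<circ> s'')"
proof
  fix x
  have inner: "(\<Sum>j<n. ract (s (e i)) (g (es i) (s' (lact b (e j))) (es j) (s'' (e k)) * es k x))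
      = (\<Sum>j<n. ract (s (e i)) (g (es i) (s' (e j)) (es j) (lact b (s'' (e k))) * es k x))"
    if "i < n" "k < n" for i k
  proof -
    define h where "h p \<phi> = ract (s (e i)) (g (es i) p \<phi> (s'' (e k)) * es k x)" for p \<phi>
    have "(\<Sum>j<n. h (s' (lact b (e j))) (es j)) = (\<Sum>j<n. h (s' (e j)) (\<lambda>y. es j (lact b y)))"
      by (rule sum_dual_basis_comp_endo[OF s' endo_lact]; simp only: h_def)
        (simp_all add: that es_dual g_add2 g_add3 g_ract23 distrib_right ract_add_right)
    then show ?thesis
      by (simp add: h_def that es_dual g_lact34)
  qed
  have "gt s (s' \<circ> lact b) s'' x
      = (\<Sum>i<n. \<Sum>k<n. \<Sum>j<n. ract (s (e i)) (g (es i) (s' (lact b (e j))) (es j) (s'' (e k)) * es k x))"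
    unfolding gtilde_def comp_def by (rule sum.cong[OF refl], rule sum.swap)
  also have "\<dots> = (\<Sum>i<n. \<Sum>k<n. \<Sum>j<n. ract (s (e i)) (g (es i) (s' (e j)) (es j) (lact b (s'' (e k))) * es k x))"
    using inner by simp
  also have "\<dots> = gt s s' (lact b \<circ> s'') x"
    unfolding gtilde_def comp_def by (rule sum.cong[OF refl], rule sum.swap)
  finally show "gt s (s' \<circ> lact b) s'' x = gt s s' (lact b \<circ> s'') x" .
qed

lemma gtilde_comp_right:
  assumes s'': "s'' \<in> endo ract" and u: "u \<in> endo ract"
  shows "gt s s' (s'' \<circ> u) = gt s s' s'' \<circ> u"
proof
  fix x
  have "(\<Sum>k<n. g (es i) (s' (e j)) (es j) (s'' (u (e k))) * es k x)
      = (\<Sum>k<n. g (es i) (s' (e j)) (es j) (s'' (e k)) * es k (u x))"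
    if "i < n" "j < n" for i j
  proof -
    have "(\<lambda>m'. g (es i) (s' (e j)) (es j) (s'' m')) \<in> dual ract"
      by (intro g_comp_endo_dual es_dual that s'')
    moreover have "(\<lambda>m'. g (es i) (s' (e j)) (es j) (s'' (u m'))) \<in> dual ract"
      using g_comp_endo_dual[OF es_dual es_dual endo_comp[OF s'' u]] that by (simp add: comp_def)
    ultimately show ?thesis
      using dual_eq_sum[of "\<lambda>m'. g (es i) (s' (e j)) (es j) (s'' m')" "u x"]
        dual_eq_sum[of "\<lambda>m'. g (es i) (s' (e j)) (es j) (s'' (u m'))" x]
      by simp
  qed
  then show "gt s s' (s'' \<circ> u) x = (gt s s' s'' \<circ> u) x"
    by (simp add: gtilde_def ract_sum_right[symmetric])
qed

lemma gtilde_precointegral_fsingle: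
  assumes s: "s \<in> endo ract" and w: "w \<in> endo ract" and v: "v \<in> endo ract"
  shows "sweedler_cong (fsingle (s, gt id w v)) (fsingle (gt s w id, v))"
proof -
  define N where "N = {..<n}"
  define T where "T i = rank_one ract (s (e i)) (es i)" for i
  define U where "U = (\<lambda>(a, j, k). rank_one ract (ract (e a) (g (es a) (w (e j)) (es j) (v (e k)))) (es k))"
  define V where "V = (\<lambda>(i, j, a). rank_one ract (ract (s (e i)) (g (es i) (w (e j)) (es j) (e a))) (es a))"
  define W where "W k = rank_one ract (v (e k)) (es k)" for k
  have endo: "\<And>i. i \<in> N \<Longrightarrow> T i \<in> endo ract" "\<And>i. i \<in> N \<Longrightarrow> W i \<in> endo ract"
    "\<And>p. p \<in> N \<times> N \<times> N \<Longrightarrow> U p \<in> endo ract" "\<And>p. p \<in> N \<times> N \<times> N \<Longrightarrow> V p \<in> endo ract"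
    by (auto simp: N_def T_def U_def V_def W_def rank_one_endo es_dual)
  have "s = (\<Sum>i\<in>N. T i)"
    unfolding N_def T_def by (rule endo_eq_sum_rank_one[OF s])
  moreover have "gt id w v = (\<Sum>p\<in>N \<times> N \<times> N. U p)"
    by (simp add: N_def U_def gtilde_eq_sum_rank_one sum_cartesian_product3)
  ultimately have "sweedler_cong (fsingle (s, gt id w v)) (\<Sum>i\<in>N. \<Sum>p\<in>N \<times> N \<times> N. fsingle (T i, U p))"
    by (simp only:) (rule tensor_cong_fsingle_sum, auto simp: add_submonoid_endo endo)
  also have "(\<Sum>i\<in>N. \<Sum>p\<in>N \<times> N \<times> N. fsingle (T i, U p))
      = (\<Sum>i\<in>N. \<Sum>j\<in>N. \<Sum>k\<in>N. \<Sum>a\<in>N. fsingle (T i, U (a, j, k)))"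
    unfolding sum_cartesian_product3 by (rule sum.cong[OF refl], rule sum_rotate3)
  also have "sweedler_cong \<dots> (\<Sum>i\<in>N. \<Sum>j\<in>N. \<Sum>k\<in>N. \<Sum>a\<in>N. fsingle (V (i, j, a), W k))"
    unfolding T_def U_def V_def W_def N_def prod.case
    by (rule tensor_cong_sum, rule tensor_cong_sum, rule tensor_cong_sum, rule rank_one_precointegral)
      (simp_all add: es_dual)
  also have "\<dots> = (\<Sum>p\<in>N \<times> N \<times> N. \<Sum>k\<in>N. fsingle (V p, W k))"
    unfolding sum_cartesian_product3 by (rule sum.cong[OF refl], rule sum.cong[OF refl], rule sum.swap)
  also have "sweedler_cong \<dots> (fsingle (gt s w id, v))"
  proof -
    have "gt s w id = (\<Sum>p\<in>N \<times> N \<times> N. V p)"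
      by (simp add: N_def V_def gtilde_eq_sum_rank_one sum_cartesian_product3)
    moreover have "v = (\<Sum>k\<in>N. W k)"
      unfolding N_def W_def by (rule endo_eq_sum_rank_one[OF v])
    ultimately show ?thesis
      by (simp only:) (rule tensor_cong_sym, rule tensor_cong_fsingle_sum, auto simp: add_submonoid_endo endo)
  qed
  finally show ?thesis .
qed

lemma gtilde_precointegral:
  assumes ds: "set ds \<subseteq> endo ract \<times> endo ract" and ds': "set ds' \<subseteq> endo ract \<times> endo ract"
  shows "tensorD lact ract
    [(s, gt id (t \<circ> u) v). (s, t) \<leftarrow> ds, (u, v) \<leftarrow> ds']
    [(gt s (t \<circ> u) id, v). (s, t) \<leftarrow> ds, (u, v) \<leftarrow> ds']"
proof -
  have "sweedler_cong (formal (map (\<lambda>(u, v). (s, gt id (t \<circ> u) v)) ds'))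
      (formal (map (\<lambda>(u, v). (gt s (t \<circ> u) id, v)) ds'))"
    if "s \<in> endo ract" "t \<in> endo ract" for s t
    unfolding formal_def map_map
    by (rule tensor_cong_sum_list) (use ds' that in \<open>auto intro!: gtilde_precointegral_fsingle endo_comp\<close>)
  then show ?thesis
    unfolding tensorD_iff_sweedler_cong formal_concat map_map
    by (intro tensor_cong_sum_list) (use ds in auto)
qed

lemma sweedler_precointegral_gtilde: "sweedler_precointegral lact ract gt"
  unfolding sweedler_precointegral_def
  by (intro conjI ballI allI impI gtilde_endo gtilde_add1 gtilde_add2 gtilde_add3 gtilde_balanced12
      gtilde_balanced23 gtilde_comp_left gtilde_comp_right gtilde_precointegral) assumption+

end

theorem lemma3p4:
  fixes lact :: "'b::ring_1 \<Rightarrow> 'm::ab_group_add \<Rightarrow> 'm"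
    and ract :: "'m \<Rightarrow> 'a::ring_1 \<Rightarrow> 'm"
    and n :: nat and e :: "nat \<Rightarrow> 'm" and es :: "nat \<Rightarrow> 'm \<Rightarrow> 'a"
    and g :: "('m \<Rightarrow> 'a) \<Rightarrow> 'm \<Rightarrow> ('m \<Rightarrow> 'a) \<Rightarrow> 'm \<Rightarrow> 'a"
  assumes "bimodule lact ract"
    and "dual_basis ract n e es"
    and "comatrix_precointegral lact ract n e es g"
  shows "sweedler_precointegral lact ract (gtilde ract n e es g)"
proof -
  interpret comatrix_precointegral_setting lact ract n e es g
    using assms by unfold_locales
  show ?thesis
    by (rule sweedler_precointegral_gtilde)
qed

end
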